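(* Let $T\in\overline{\mathrm{Sub}}(X,1)$ and let $r$ be a positive integer with $T\subset B(1,r)$. Then \[ \mathcal{R}(T)=\bigsqcup_{\substack{T_1,T_2\in\mathcal{R}_{r+1}\\ T_1\cap T_2=T}}\mathrm{SCyl}(T_1)\times\mathrm{SCyl}(T_2),\] a disjoint union.
   Context: $N\geq2$, $F_N$ free with free basis $A$, $X$ its Cayley graph (a tree with vertex set $F_N$, unit edge lengths, path metric $d_X$), $\partial X$ its boundary, $B(1,r)=\{x\in X: d_X(1,x)\le r\}$. $\mathcal{C}_N$: closed subsets of $\partial X$ with at least two points. $\mathrm{Conv}(S)$: union of bi-infinite geodesics joining points of $S$. $\overline{\mathrm{Sub}}(X,1)$: finite subtrees of $X$ containing $1$ (including $\{1\}$). $\mathcal{R}(T)=\{(S_1,S_2)\in\mathcal{C}_N^2:\mathrm{Conv}(S_1)\cap\mathrm{Conv}(S_2)=T\}$. For an oriented edge $e$, $\mathrm{Cyl}(e)$ is the set of ends of geodesic rays starting with $e$; for a finite subtree $T'$ with $\geq2$ vertices and terminal edges $e_1,\dots,e_m$ (oriented edges ending at degree-one vertices), $\mathrm{SCyl}(T')=\{S\in\mathcal{C}_N: S\subset\bigcup_i\mathrm{Cyl}(e_i),\ S\cap\mathrm{Cyl}(e_i)\neq\emptyset\ \forall i\}$. For an integer $r\ge1$, $\mathcal{R}_r$ (round graphs of grade $r$ based at $1$) is the set of finite subtrees $T'$ of $X$ containing $1$ such that $1$ has degree $\geq 2$ in $T'$ and every degree-one vertex $u$ of $T'$ satisfies $d_X(1,u)=r$.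 *)

theory Defs
  imports Main
begin

text \<open>Free group F_N on the basis A = {0..<N}. A letter is a pair (i, b):
  generator a_i (b = True) or its inverse (b = False). Elements of F_N are
  reduced words; the Cayley graph X (right multiplication) has vertex set the
  reduced words and an edge between w and w a for every letter a; for reduced
  words this means one word is the other extended by one letter.\<close>

type_synonym letter = "nat \<times> bool"
type_synonym word = "letter list"

definition inv_letter :: "letter \<Rightarrow> letter" where
  "inv_letter a = (fst a, \<not> snd a)"

definition vertices :: "nat \<Rightarrow> word set" where
  "vertices N = {w. (\<forall>x\<in>set w. fst x < N) \<and>
                    (\<forall>i. Suc i < length w \<longrightarrow> w ! Suc i \<noteq> inv_letter (w ! i))}"

definition adj :: "nat \<Rightarrow> word \<Rightarrow> word \<Rightarrow> bool" where
  "adj N u v \<longleftrightarrow> u \<in> vertices N \<and> v \<in> vertices N \<and>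
     (\<exists>a. v = u @ [a] \<or> u = v @ [a])"

text \<open>Distance in X from the identity 1 (the empty word): word length.\<close>
definition dist1 :: "word \<Rightarrow> nat" where
  "dist1 w = length w"

text \<open>Boundary \<partial>X: infinite reduced words (ends of geodesic rays from 1).\<close>
definition bdry :: "nat \<Rightarrow> (nat \<Rightarrow> letter) set" where
  "bdry N = {\<xi>. \<forall>n. fst (\<xi> n) < N \<and> \<xi> (Suc n) \<noteq> inv_letter (\<xi> n)}"

definition conv_to :: "(nat \<Rightarrow> word) \<Rightarrow> (nat \<Rightarrow> letter) \<Rightarrow> bool" where
  "conv_to f \<xi> \<longleftrightarrow> (\<forall>k. \<exists>n0. \<forall>n\<ge>n0. k \<le> length (f n) \<and> take k (f n) = map \<xi> [0..<k])"

definition closed_bdry :: "nat \<Rightarrow> (nat \<Rightarrow> letter) set \<Rightarrow> bool" where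
  "closed_bdry N S \<longleftrightarrow> (\<forall>\<xi>\<in>bdry N. (\<forall>k. \<exists>\<eta>\<in>S. \<forall>i<k. \<eta> i = \<xi> i) \<longrightarrow> \<xi> \<in> S)"

definition CN :: "nat \<Rightarrow> (nat \<Rightarrow> letter) set set" where
  "CN N = {S. S \<subseteq> bdry N \<and> closed_bdry N S \<and> (\<exists>\<xi>\<in>S. \<exists>\<eta>\<in>S. \<xi> \<noteq> \<eta>)}"

definition geod_ray :: "nat \<Rightarrow> (nat \<Rightarrow> word) \<Rightarrow> bool" where
  "geod_ray N \<gamma> \<longleftrightarrow> (\<forall>n. adj N (\<gamma> n) (\<gamma> (Suc n)) \<and> \<gamma> (Suc (Suc n)) \<noteq> \<gamma> n)"

definition geod_line :: "nat \<Rightarrow> (int \<Rightarrow> word) \<Rightarrow> bool" where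
  "geod_line N \<gamma> \<longleftrightarrow> (\<forall>n. adj N (\<gamma> n) (\<gamma> (n + 1)) \<and> \<gamma> (n + 2) \<noteq> \<gamma> n)"

text \<open>Conv(S), represented by its vertex set (it is a union of closed edges,
  hence a subtree determined by its vertices).\<close>
definition Conv :: "nat \<Rightarrow> (nat \<Rightarrow> letter) set \<Rightarrow> word set" where
  "Conv N S = {\<gamma> m | \<gamma> m \<xi> \<eta>. geod_line N \<gamma> \<and> \<xi> \<in> S \<and> \<eta> \<in> S \<and>
       conv_to (\<lambda>n. \<gamma> (int n)) \<xi> \<and> conv_to (\<lambda>n. \<gamma> (- int n)) \<eta>}"

definition Cyl :: "nat \<Rightarrow> word \<Rightarrow> word \<Rightarrow> (nat \<Rightarrow> letter) set" where
  "Cyl N u v = {\<xi> \<in> bdry N. \<exists>\<gamma>. geod_ray N \<gamma> \<and> \<gamma> 0 = u \<and> \<gamma> 1 = v \<and> conv_to \<gamma> \<xi>}"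

definition subtree :: "nat \<Rightarrow> word set \<Rightarrow> bool" where
  "subtree N T \<longleftrightarrow> T \<noteq> {} \<and> T \<subseteq> vertices N \<and>
     (\<forall>u\<in>T. \<forall>v\<in>T. \<exists>p. p \<noteq> [] \<and> hd p = u \<and> last p = v \<and> set p \<subseteq> T \<and>
          (\<forall>i. Suc i < length p \<longrightarrow> adj N (p ! i) (p ! Suc i)))"

definition SubBar :: "nat \<Rightarrow> word set set" where
  "SubBar N = {T. finite T \<and> subtree N T \<and> [] \<in> T}"

definition deg :: "nat \<Rightarrow> word set \<Rightarrow> word \<Rightarrow> nat" where
  "deg N T v = card {u \<in> T. adj N u v}"

definition terminal_edges :: "nat \<Rightarrow> word set \<Rightarrow> (word \<times> word) set" where
  "terminal_edges N T = {(u, v). u \<in> T \<and> v \<in> T \<and> adj N u v \<and> deg N T v = 1}"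

definition SCyl :: "nat \<Rightarrow> word set \<Rightarrow> (nat \<Rightarrow> letter) set set" where
  "SCyl N T = {S \<in> CN N. S \<subseteq> (\<Union>e\<in>terminal_edges N T. Cyl N (fst e) (snd e)) \<and>
                 (\<forall>e\<in>terminal_edges N T. S \<inter> Cyl N (fst e) (snd e) \<noteq> {})}"

definition Rset :: "nat \<Rightarrow> word set \<Rightarrow> ((nat \<Rightarrow> letter) set \<times> (nat \<Rightarrow> letter) set) set" where
  "Rset N T = {(S1, S2). S1 \<in> CN N \<and> S2 \<in> CN N \<and> Conv N S1 \<inter> Conv N S2 = T}"

definition round_graphs :: "nat \<Rightarrow> nat \<Rightarrow> word set set" where
  "round_graphs N r = {T. finite T \<and> subtree N T \<and> [] \<in> T \<and> deg N T [] \<ge> 2 \<and>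
       (\<forall>u\<in>T. deg N T u = 1 \<longrightarrow> dist1 u = r)}"

end

theory Submission
  imports Defs
begin

(*
  Every boundary point is an infinite reduced word xi; pre xi j is its prefix of length j,
  and Pref S is the set of all finite prefixes of points of S.

  A bi-infinite geodesic consists of the prefixes of its two ends, which
      separate at its vertex closest to 1.  Hence 1 lies in Conv S only if S branches at
      the root (two of its points have different first letters), and then Conv S = Pref S.
  (2) Rooted subtrees.  Finite subtrees containing 1 are exactly the finite prefix-closed
      sets of reduced words.  There the neighbours of v are its children and its parent,
      so the degree-one vertices other than 1 are the leaves (childless vertices), and the
      terminal edges are the edges from the leaves to their parents.
  (3) Truncations and shadow cylinders.  Let trunc S R be the set of prefixes of length at
      most R of points of S.  For a round graph T of grade R, S lies in SCyl T iff the
      length-R prefixes of the points of S are exactly the leaves of T.  Consequently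
      T is a round graph of grade R with S in SCyl T iff S is a closed set branching at
      the root and T = trunc S R (lemma SCyl_round_graph_iff).
  (4) Decomposition.  As the vertices of T have length at most r, the condition
      Pref S1 \<inter> Pref S2 = T only depends on trunc S1 (r+1) and trunc S2 (r+1).  With (1)
      and (3) this identifies R(T) with the union of the products SCyl T1 \<times> SCyl T2;
      disjointness holds because S determines T1 = trunc S (r+1).
*)

section \<open>Prefixes of boundary points\<close>

definition pre :: "(nat \<Rightarrow> letter) \<Rightarrow> nat \<Rightarrow> word" where
  "pre \<xi> j = map \<xi> [0..<j]"

definition Pref :: "(nat \<Rightarrow> letter) set \<Rightarrow> word set" where
  "Pref S = {pre \<xi> j | \<xi> j. \<xi> \<in> S}"

lemma length_pre [simp]: "length (pre \<xi> j) = j"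
  by (simp add: pre_def)

lemma take_pre [simp]: "take k (pre \<xi> j) = pre \<xi> (min k j)"
  by (cases "k \<le> j") (auto simp: pre_def take_map min_def)

lemma pre_Suc: "pre \<xi> (Suc j) = pre \<xi> j @ [\<xi> j]"
  by (simp add: pre_def)

lemma pre_0 [simp]: "pre \<xi> 0 = []"
  by (simp add: pre_def)

lemma pre_1: "pre \<xi> (Suc 0) = [\<xi> 0]"
  by (simp add: pre_def)

lemma pre_vertex: "\<xi> \<in> bdry N \<Longrightarrow> pre \<xi> j \<in> vertices N"
  by (auto simp: pre_def vertices_def bdry_def)

lemma Pref_take:
  assumes "w \<in> Pref S" shows "take k w \<in> Pref S"
proof -
  obtain \<xi> j where "\<xi> \<in> S" and "take k w = pre \<xi> (min k j)"
    using assms unfolding Pref_def by auto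
  then show ?thesis unfolding Pref_def by blast
qed

lemma adj_cases: "adj N u v \<Longrightarrow> (\<exists>a. v = u @ [a]) \<or> (\<exists>a. u = v @ [a])"
  by (auto simp: adj_def)

lemma adj_sym: "adj N u v \<Longrightarrow> adj N v u"
  by (auto simp: adj_def)

lemma adj_snoc: "u @ [a] \<in> vertices N \<Longrightarrow> u \<in> vertices N \<Longrightarrow> adj N u (u @ [a])"
  by (auto simp: adj_def)

lemma adj_pre: "\<xi> \<in> bdry N \<Longrightarrow> adj N (pre \<xi> j) (pre \<xi> (Suc j))"
  using adj_snoc[of "pre \<xi> j" "\<xi> j" N] pre_vertex[of \<xi> N] by (metis pre_Suc)

lemma conv_pre: "conv_to (\<lambda>n. pre \<xi> (c + n)) \<xi>"
  unfolding conv_to_def by (metis le_add2 le_trans min.absorb1 take_pre pre_def length_pre)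

section \<open>Geodesic rays and lines\<close>

lemma conv_to_reindex:
  assumes f: "conv_to f \<xi>" and gh: "\<And>m. \<exists>n0. \<forall>n\<ge>n0. g n = f (h n) \<and> m \<le> h n"
  shows "conv_to g \<xi>"
  unfolding conv_to_def
proof
  fix k
  obtain m where m: "\<And>n. n \<ge> m \<Longrightarrow> k \<le> length (f n) \<and> take k (f n) = map \<xi> [0..<k]"
    using f unfolding conv_to_def by blast
  obtain n0 where "\<forall>n\<ge>n0. g n = f (h n) \<and> m \<le> h n" using gh by blast
  then show "\<exists>n0. \<forall>n\<ge>n0. k \<le> length (g n) \<and> take k (g n) = map \<xi> [0..<k]"
    using m by metis
qed

lemma geod_ray_outward:
  assumes r: "geod_ray N f" and f1: "f 1 = f 0 @ [a]"
  shows "\<exists>b. f (Suc n) = f n @ [b]"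
proof (induction n)
  case 0 then show ?case using f1 by simp
next
  case (Suc n)
  then obtain b where b: "f (Suc n) = f n @ [b]" by blast
  have "adj N (f (Suc n)) (f (Suc (Suc n)))" and "f (Suc (Suc n)) \<noteq> f n"
    using r unfolding geod_ray_def by blast+
  with b show ?case by (metis adj_cases butlast_snoc)
qed

lemma geod_ray_extends:
  assumes "geod_ray N f" and "f 1 = f 0 @ [a]"
  shows "\<exists>s. f (j + d) = f j @ s \<and> length s = d"
proof (induction d)
  case 0 then show ?case by simp
next
  case (Suc d)
  then obtain s where "f (j + d) = f j @ s" "length s = d" by blast
  moreover obtain b where "f (Suc (j + d)) = f (j + d) @ [b]"
    using geod_ray_outward[OF assms] by blast
  ultimately show ?case by (intro exI[of _ "s @ [b]"]) simp
qed

lemma geod_ray_prefixes: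
  assumes r: "geod_ray N f" and up: "length (f 0) \<le> length (f 1)" and c: "conv_to f \<xi>"
  shows "f j = pre \<xi> (length (f 0) + j)"
proof -
  have "adj N (f 0) (f 1)" using r unfolding geod_ray_def by simp
  then obtain a where f1: "f 1 = f 0 @ [a]" using up adj_cases by fastforce
  have len: "length (f j) = length (f 0) + j"
    using geod_ray_extends[OF r f1, of 0 j] by auto
  let ?k = "length (f 0) + j"
  obtain n0 where n0: "\<And>n. n \<ge> n0 \<Longrightarrow> take ?k (f n) = map \<xi> [0..<?k]"
    using c unfolding conv_to_def by blast
  define n where "n = max n0 j"
  obtain s where "f (j + (n - j)) = f j @ s" using geod_ray_extends[OF r f1] by blast
  then have "take ?k (f n) = f j" using len by (simp add: n_def)
  then show ?thesis using n0[of n] by (simp add: n_def pre_def)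
qed

lemma geod_line_prefixes:
  assumes g: "geod_line N \<gamma>" and c1: "conv_to (\<lambda>n. \<gamma> (int n)) \<xi>"
    and c2: "conv_to (\<lambda>n. \<gamma> (- int n)) \<eta>"
  shows "\<exists>m0. (\<forall>m. length (\<gamma> m0) \<le> length (\<gamma> m)) \<and>
              (\<forall>j. \<gamma> (m0 + int j) = pre \<xi> (length (\<gamma> m0) + j)) \<and>
              (\<forall>j. \<gamma> (m0 - int j) = pre \<eta> (length (\<gamma> m0) + j)) \<and>
              \<xi> (length (\<gamma> m0)) \<noteq> \<eta> (length (\<gamma> m0))"
proof -
  obtain m0 where min: "\<And>m. length (\<gamma> m0) \<le> length (\<gamma> m)"
    using ex_has_least_nat[where P = "\<lambda>_. True" and m = "\<lambda>m. length (\<gamma> m)"] by auto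
  have gl: "adj N (\<gamma> n) (\<gamma> (n + 1)) \<and> \<gamma> (n + 2) \<noteq> \<gamma> n" for n
    using g unfolding geod_line_def by blast
  define f where "f j = \<gamma> (m0 + int j)" for j
  define h where "h j = \<gamma> (m0 - int j)" for j
  have rf: "geod_ray N f"
    unfolding geod_ray_def
  proof
    fix n
    show "adj N (f n) (f (Suc n)) \<and> f (Suc (Suc n)) \<noteq> f n"
      using gl[of "m0 + int n"] by (simp add: f_def algebra_simps)
  qed
  have rh: "geod_ray N h"
    unfolding geod_ray_def
  proof
    fix n
    show "adj N (h n) (h (Suc n)) \<and> h (Suc (Suc n)) \<noteq> h n"
      using adj_sym gl[of "m0 - int n - 1"] gl[of "m0 - int n - 2"]
      by (simp add: h_def algebra_simps) metis
  qed
  have cf: "conv_to f \<xi>"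
  proof (rule conv_to_reindex[OF c1, where h = "\<lambda>j. nat (m0 + int j)"])
    show "\<exists>n0. \<forall>n\<ge>n0. f n = \<gamma> (int (nat (m0 + int n))) \<and> k \<le> nat (m0 + int n)" for k
      by (intro exI[of _ "nat \<bar>m0\<bar> + k"]) (auto simp: f_def)
  qed
  have ch: "conv_to h \<eta>"
  proof (rule conv_to_reindex[OF c2, where h = "\<lambda>j. nat (int j - m0)"])
    show "\<exists>n0. \<forall>n\<ge>n0. h n = \<gamma> (- int (nat (int n - m0))) \<and> k \<le> nat (int n - m0)" for k
      by (intro exI[of _ "nat \<bar>m0\<bar> + k"]) (auto simp: h_def)
  qed
  have F: "f j = pre \<xi> (length (\<gamma> m0) + j)" for j
    using geod_ray_prefixes[OF rf _ cf, of j] min by (simp add: f_def)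
  have H: "h j = pre \<eta> (length (\<gamma> m0) + j)" for j
    using geod_ray_prefixes[OF rh _ ch, of j] min by (simp add: h_def)
  have "f 1 \<noteq> h 1"
    using gl[of "m0 - 1"] by (simp add: f_def h_def algebra_simps)
  moreover have "pre \<xi> (length (\<gamma> m0)) = pre \<eta> (length (\<gamma> m0))"
    using F[of 0] H[of 0] by (simp add: f_def h_def)
  ultimately have "\<xi> (length (\<gamma> m0)) \<noteq> \<eta> (length (\<gamma> m0))"
    using F[of 1] H[of 1] by (auto simp: pre_Suc)
  with min F H show ?thesis by (auto simp: f_def h_def)
qed

lemma geod_line_through_root:
  assumes bx: "\<xi> \<in> bdry N" and be: "\<eta> \<in> bdry N" and ne: "\<xi> 0 \<noteq> \<eta> 0"
  defines "\<gamma> \<equiv> \<lambda>m::int. if 0 \<le> m then pre \<xi> (nat m) else pre \<eta> (nat (- m))"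
  shows "geod_line N \<gamma>"
  unfolding geod_line_def
proof
  fix n :: int
  have "adj N (\<gamma> n) (\<gamma> (n + 1))"
  proof (cases "n \<ge> 0")
    case True
    then show ?thesis using adj_pre[OF bx, of "nat n"] by (simp add: \<gamma>_def nat_add_distrib)
  next
    case False
    then have "\<gamma> n = pre \<eta> (Suc (nat (- (n + 1))))" "\<gamma> (n + 1) = pre \<eta> (nat (- (n + 1)))"
      by (simp_all add: \<gamma>_def nat_diff_distrib' Suc_nat_eq_nat_zadd1)
    then show ?thesis using adj_sym[OF adj_pre[OF be]] by simp
  qed
  moreover have "\<gamma> (n + 2) \<noteq> \<gamma> n"
  proof (cases "n = -1")
    case True
    then show ?thesis using ne by (simp add: \<gamma>_def pre_1)
  next
    case False
    have "length (\<gamma> m) = nat \<bar>m\<bar>" for m by (simp add: \<gamma>_def)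
    moreover have "nat \<bar>n + 2\<bar> \<noteq> nat \<bar>n\<bar>" using False by arith
    ultimately show ?thesis by metis
  qed
  ultimately show "adj N (\<gamma> n) (\<gamma> (n + 1)) \<and> \<gamma> (n + 2) \<noteq> \<gamma> n" by blast
qed

section \<open>The convex hull of a closed set of ends\<close>

definition branches :: "(nat \<Rightarrow> letter) set \<Rightarrow> bool" where
  "branches S \<longleftrightarrow> (\<exists>\<xi>\<in>S. \<exists>\<eta>\<in>S. \<xi> 0 \<noteq> \<eta> 0)"

lemma Conv_subset_Pref: "Conv N S \<subseteq> Pref S"
proof
  fix w assume "w \<in> Conv N S"
  then obtain \<gamma> m \<xi> \<eta> where w: "w = \<gamma> m" and g: "geod_line N \<gamma>" and S: "\<xi> \<in> S" "\<eta> \<in> S"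
    and c1: "conv_to (\<lambda>n. \<gamma> (int n)) \<xi>" and c2: "conv_to (\<lambda>n. \<gamma> (- int n)) \<eta>"
    unfolding Conv_def by blast
  obtain m0 where F: "\<And>j. \<gamma> (m0 + int j) = pre \<xi> (length (\<gamma> m0) + j)"
    and H: "\<And>j. \<gamma> (m0 - int j) = pre \<eta> (length (\<gamma> m0) + j)"
    using geod_line_prefixes[OF g c1 c2] by blast
  show "w \<in> Pref S"
  proof (cases "m0 \<le> m")
    case True
    then have "w = \<gamma> (m0 + int (nat (m - m0)))" using w by simp
    also have "\<dots> = pre \<xi> (length (\<gamma> m0) + nat (m - m0))" by (rule F)
    finally show ?thesis using S unfolding Pref_def by blast
  next
    case False
    then have "w = \<gamma> (m0 - int (nat (m0 - m)))" using w by simp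
    also have "\<dots> = pre \<eta> (length (\<gamma> m0) + nat (m0 - m))" by (rule H)
    finally show ?thesis using S unfolding Pref_def by blast
  qed
qed

text \<open>A geodesic line passes through 1 only if its two ends start with different letters.\<close>
lemma branches_if_root_in_Conv: "[] \<in> Conv N S \<Longrightarrow> branches S"
proof -
  assume "[] \<in> Conv N S"
  then obtain \<gamma> m \<xi> \<eta> where w: "[] = \<gamma> m" and g: "geod_line N \<gamma>" and S: "\<xi> \<in> S" "\<eta> \<in> S"
    and c1: "conv_to (\<lambda>n. \<gamma> (int n)) \<xi>" and c2: "conv_to (\<lambda>n. \<gamma> (- int n)) \<eta>"
    unfolding Conv_def by blast
  obtain m0 where "length (\<gamma> m0) \<le> length (\<gamma> m)" and "\<xi> (length (\<gamma> m0)) \<noteq> \<eta> (length (\<gamma> m0))"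
    using geod_line_prefixes[OF g c1 c2] by blast
  with w S show ?thesis unfolding branches_def by (metis le_zero_eq list.size(3))
qed

text \<open>Conversely, if S branches, every prefix of a point of S lies on the line through 1
  joining it to a point of S with a different first letter.\<close>
lemma Pref_subset_Conv:
  assumes S: "S \<subseteq> bdry N" and br: "branches S"
  shows "Pref S \<subseteq> Conv N S"
proof
  fix w assume "w \<in> Pref S"
  then obtain \<xi> j where w: "w = pre \<xi> j" and \<xi>: "\<xi> \<in> S" unfolding Pref_def by blast
  obtain \<eta> where \<eta>: "\<eta> \<in> S" "\<xi> 0 \<noteq> \<eta> 0" using br unfolding branches_def by metis
  define \<gamma> where "\<gamma> m = (if 0 \<le> m then pre \<xi> (nat m) else pre \<eta> (nat (- m)))" for m :: int
  have "geod_line N \<gamma>"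
    unfolding \<gamma>_def using geod_line_through_root S \<xi> \<eta> by blast
  moreover have "conv_to (\<lambda>n. \<gamma> (int n)) \<xi>" using conv_pre[of \<xi> 0] by (simp add: \<gamma>_def)
  moreover have "(\<lambda>n. \<gamma> (- int n)) = (\<lambda>n. pre \<eta> (0 + n))"
    by (auto simp: \<gamma>_def)
  then have "conv_to (\<lambda>n. \<gamma> (- int n)) \<eta>" using conv_pre[of \<eta> 0] by simp
  moreover have "w = \<gamma> (int j)" using w by (simp add: \<gamma>_def)
  ultimately show "w \<in> Conv N S" unfolding Conv_def using \<xi> \<eta> by blast
qed

lemma Conv_eq_Pref: "S \<in> CN N \<Longrightarrow> branches S \<Longrightarrow> Conv N S = Pref S"
  using Conv_subset_Pref Pref_subset_Conv unfolding CN_def by blast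

lemma Rset_rooted:
  assumes "[] \<in> T"
  shows "Rset N T = {(S1, S2). S1 \<in> CN N \<and> S2 \<in> CN N \<and> branches S1 \<and> branches S2 \<and>
                                Pref S1 \<inter> Pref S2 = T}"
  using assms branches_if_root_in_Conv Conv_eq_Pref unfolding Rset_def by blast

section \<open>Subtrees containing the root are prefix-closed\<close>

lemma adj_take:
  assumes "take k w \<in> vertices N" and "take (Suc k) w \<in> vertices N" and "k < length w"
  shows "adj N (take k w) (take (Suc k) w)"
  using assms adj_snoc by (metis take_Suc_conv_app_nth)

lemma path_from_root_visits_prefixes:
  "successively (adj N) p \<Longrightarrow> p \<noteq> [] \<Longrightarrow> hd p = [] \<Longrightarrow> take k (last p) \<in> set p"
proof (induction p arbitrary: k rule: rev_induct)
  case Nil then show ?case by simp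
next
  case (snoc x xs)
  show ?case
  proof (cases "xs = []")
    case True
    then show ?thesis using snoc.prems by simp
  next
    case False
    have "successively (adj N) xs" and "adj N (last xs) x"
      using snoc.prems(1) False by (auto simp: successively_append_iff)
    then have IH: "take k (last xs) \<in> set xs"
      using snoc.IH False snoc.prems(3) by simp
    have "take k x = take k (last xs) \<or> take k x = x"
      using adj_cases[OF \<open>adj N (last xs) x\<close>]
      by (cases "k \<le> length x"; cases "k \<le> length (last xs)") auto
    then show ?thesis using IH by auto
  qed
qed

lemma subtree_take: "subtree N T \<Longrightarrow> [] \<in> T \<Longrightarrow> v \<in> T \<Longrightarrow> take k v \<in> T"
  unfolding subtree_def using path_from_root_visits_prefixes successively_conv_nth
  by (metis subsetD)

text \<open>Conversely a prefix-closed set of reduced words is a subtree: two of its vertices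
  are joined by going down to 1 through the prefixes of the first and up again through
  the prefixes of the second.\<close>
lemma subtree_if_prefix_closed:
  assumes V: "T \<subseteq> vertices N" and root: "[] \<in> T" and pc: "\<And>v k. v \<in> T \<Longrightarrow> take k v \<in> T"
  shows "subtree N T"
  unfolding subtree_def
proof (intro conjI ballI)
  have step: "adj N (take k w) (take (Suc k) w)" if "w \<in> T" "k < length w" for w k
    using adj_take pc V that by blast
  fix u v assume u: "u \<in> T" and v: "v \<in> T"
  define p where "p = map (\<lambda>i. if i \<le> length u then take (length u - i) u else take (i - length u) v)
                         [0..<length u + length v + 1]"
  have "adj N (p ! i) (p ! Suc i)" if i: "Suc i < length p" for i
  proof (cases "Suc i \<le> length u")
    case True
    then have "p ! i = take (Suc (length u - Suc i)) u" "p ! Suc i = take (length u - Suc i) u"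
      using i by (auto simp: p_def Suc_diff_Suc simp del: upt_Suc)
    then show ?thesis using step[OF u, of "length u - Suc i"] True adj_sym by auto
  next
    case False
    then have "p ! i = take (i - length u) v" "p ! Suc i = take (Suc (i - length u)) v"
      using i by (auto simp: p_def Suc_diff_le simp del: upt_Suc)
    then show ?thesis using step[OF v, of "i - length u"] False i by (simp add: p_def)
  qed
  moreover have "p \<noteq> []" "hd p = u" "last p = v" "set p \<subseteq> T"
    using u v pc by (auto simp: p_def hd_map last_map simp del: upt_Suc)
  ultimately show "\<exists>p. p \<noteq> [] \<and> hd p = u \<and> last p = v \<and> set p \<subseteq> T \<and>
                      (\<forall>i. Suc i < length p \<longrightarrow> adj N (p ! i) (p ! Suc i))"
    by blast
qed (use V root in auto)

section \<open>Children, leaves and degrees in rooted subtrees\<close>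

definition children :: "word set \<Rightarrow> word \<Rightarrow> word set" where
  "children T v = {u \<in> T. \<exists>a. u = v @ [a]}"

definition leaves :: "word set \<Rightarrow> word set" where
  "leaves T = {v \<in> T. children T v = {}}"

lemma two_le_card_iff: "finite A \<Longrightarrow> 2 \<le> card A \<longleftrightarrow> (\<exists>x\<in>A. \<exists>y\<in>A. x \<noteq> y)"
  by (metis One_nat_def card_2_iff card_le_Suc0_iff_eq card_mono empty_subsetI insert_subset
      not_less_eq_eq numeral_2_eq_2)

lemma neighbours_rooted:
  assumes T: "subtree N T" "[] \<in> T" and v: "v \<in> T"
  shows "{u \<in> T. adj N u v} = children T v \<union> (if v = [] then {} else {butlast v})"
proof (intro equalityI subsetI)
  fix u assume "u \<in> {u \<in> T. adj N u v}"
  then show "u \<in> children T v \<union> (if v = [] then {} else {butlast v})"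
    using adj_cases unfolding children_def by fastforce
next
  have V: "T \<subseteq> vertices N" using T unfolding subtree_def by blast
  fix u assume u: "u \<in> children T v \<union> (if v = [] then {} else {butlast v})"
  show "u \<in> {u \<in> T. adj N u v}"
  proof (cases "u \<in> children T v")
    case True
    then show ?thesis using V v adj_snoc adj_sym unfolding children_def by blast
  next
    case False
    then have "v \<noteq> []" "u = butlast v" using u by (auto split: if_splits)
    moreover have "butlast v \<in> T"
      using subtree_take[OF T v] by (simp add: butlast_conv_take)
    ultimately show ?thesis
      using V v adj_snoc[of u "last v" N] by (metis append_butlast_last_id subsetD mem_Collect_eq)
  qed
qed

lemma deg_rooted:
  assumes "finite T" "subtree N T" "[] \<in> T" "v \<in> T"
  shows "deg N T v = card (children T v) + (if v = [] then 0 else 1)"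
proof -
  have "finite (children T v)" "butlast v \<notin> children T v" if "v \<noteq> []"
    using assms that unfolding children_def by (auto dest: arg_cong[where f = length])
  then show ?thesis
    unfolding deg_def neighbours_rooted[OF assms(2-4)] by simp
qed

lemma deg_one_iff_leaf:
  assumes "finite T" "subtree N T" "[] \<in> T" "v \<in> T" "v \<noteq> []"
  shows "deg N T v = 1 \<longleftrightarrow> v \<in> leaves T"
proof -
  have "finite (children T v)" using assms(1) unfolding children_def by simp
  then show ?thesis using deg_rooted[OF assms(1-4)] assms(4,5) unfolding leaves_def by simp
qed

lemma terminal_edges_rooted:
  assumes T: "finite T" "subtree N T" "[] \<in> T" and root: "2 \<le> deg N T []"
  shows "(u, v) \<in> terminal_edges N T \<longleftrightarrow> v \<in> leaves T \<and> v \<noteq> [] \<and> u = butlast v"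
proof
  assume uv: "(u, v) \<in> terminal_edges N T"
  then have "v \<in> T" "v \<noteq> []" "u \<in> {u \<in> T. adj N u v}" "deg N T v = 1"
    using root unfolding terminal_edges_def by auto
  moreover from this have "v \<in> leaves T" using deg_one_iff_leaf[OF T] by blast
  ultimately show "v \<in> leaves T \<and> v \<noteq> [] \<and> u = butlast v"
    using neighbours_rooted[OF T(2,3)] unfolding leaves_def by auto
next
  assume v: "v \<in> leaves T \<and> v \<noteq> [] \<and> u = butlast v"
  then have "v \<in> T" "u \<in> {u \<in> T. adj N u v}"
    using neighbours_rooted[OF T(2,3)] unfolding leaves_def by auto
  with v show "(u, v) \<in> terminal_edges N T"
    using deg_one_iff_leaf[OF T] unfolding terminal_edges_def by auto
qed

text \<open>Every vertex of a finite tree lies below a leaf: take a longest extension.\<close>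
lemma leaf_below:
  assumes "finite T" "w \<in> T"
  shows "\<exists>v\<in>leaves T. take (length w) v = w"
proof -
  define D where "D = {v \<in> T. take (length w) v = w}"
  have "finite D" "w \<in> D" using assms by (auto simp: D_def)
  then have "Max (length ` D) \<in> length ` D" by (intro Max_in) auto
  then obtain v where v: "v \<in> D" and lv: "length v = Max (length ` D)" by (metis imageE)
  have max: "length x \<le> length v" if "x \<in> D" for x
    using \<open>finite D\<close> that lv by simp
  have "length w \<le> length v" using v by (auto simp: D_def dest: arg_cong[of _ _ length])
  then have "children T v = {}"
    using v max unfolding D_def children_def by fastforce
  with v show ?thesis unfolding D_def leaves_def by blast
qed

text \<open>In a round graph 1 has children, so every leaf has degree one and lies on the
  sphere of radius R; and the graph consists of the prefixes of its leaves.\<close>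
lemma round_graph_leaf_length:
  assumes T: "T \<in> round_graphs N R" and v: "v \<in> leaves T"
  shows "length v = R"
proof -
  have fin: "finite T" "subtree N T" "[] \<in> T" and root: "2 \<le> deg N T []"
    using T unfolding round_graphs_def by auto
  have "v \<noteq> []"
    using v root deg_rooted[OF fin] unfolding leaves_def by auto
  then show ?thesis
    using T v deg_one_iff_leaf[OF fin] unfolding round_graphs_def leaves_def dist1_def by auto
qed

lemma round_graph_prefixes_of_leaves:
  assumes T: "T \<in> round_graphs N R"
  shows "T = {take j v | j v. v \<in> leaves T}"
proof -
  have fin: "finite T" "subtree N T" "[] \<in> T" using T unfolding round_graphs_def by auto
  show ?thesis
  proof (intro equalityI subsetI)
    fix w assume "w \<in> T"
    then obtain v where "v \<in> leaves T" "w = take (length w) v"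
      using leaf_below[OF fin(1)] by metis
    then show "w \<in> {take j v | j v. v \<in> leaves T}" by blast
  next
    fix w assume "w \<in> {take j v | j v. v \<in> leaves T}"
    then show "w \<in> T" using subtree_take[OF fin(2,3)] unfolding leaves_def by blast
  qed
qed

section \<open>Truncations of a set of ends\<close>

definition trunc :: "(nat \<Rightarrow> letter) set \<Rightarrow> nat \<Rightarrow> word set" where
  "trunc S R = {pre \<xi> j | \<xi> j. \<xi> \<in> S \<and> j \<le> R}"

lemma trunc_eq_Pref: "trunc S R = Pref S \<inter> {w. length w \<le> R}"
  unfolding trunc_def Pref_def by force

lemma trunc_prefixes: "trunc S R = {take j v | j v. v \<in> (\<lambda>\<xi>. pre \<xi> R) ` S}"
proof (intro equalityI subsetI)
  fix w assume "w \<in> trunc S R"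
  then obtain \<xi> j where "\<xi> \<in> S" "j \<le> R" "w = pre \<xi> j" unfolding trunc_def by blast
  then have "\<xi> \<in> S" "w = take j (pre \<xi> R)" by (simp_all add: min_absorb1)
  then show "w \<in> {take j v | j v. v \<in> (\<lambda>\<xi>. pre \<xi> R) ` S}" by blast
next
  fix w assume "w \<in> {take j v | j v. v \<in> (\<lambda>\<xi>. pre \<xi> R) ` S}"
  then obtain \<xi> j where "\<xi> \<in> S" "w = pre \<xi> (min j R)" by auto
  then show "w \<in> trunc S R" unfolding trunc_def by fastforce
qed

text \<open>There are finitely many reduced words of bounded length.\<close>
lemma finite_trunc:
  assumes "S \<subseteq> bdry N" shows "finite (trunc S R)"
proof (rule finite_subset)
  have "fst (\<xi> n) < N" if "\<xi> \<in> S" for \<xi> n using assms that unfolding bdry_def by blast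
  then have "set (pre \<xi> j) \<subseteq> {0..<N} \<times> UNIV" if "\<xi> \<in> S" for \<xi> j
    using that unfolding pre_def by (auto simp: mem_Times_iff) (metis fst_conv)
  then show "trunc S R \<subseteq> {w. set w \<subseteq> {0..<N} \<times> UNIV \<and> length w \<le> R}"
    unfolding trunc_def by auto
  show "finite {w. set w \<subseteq> {0..<N} \<times> (UNIV :: bool set) \<and> length w \<le> R}"
    by (rule finite_lists_length_le) simp
qed

text \<open>trunc S R is prefix-closed, hence a subtree containing 1.\<close>
lemma trunc_subtree:
  assumes "S \<subseteq> bdry N" and "S \<noteq> {}"
  shows "subtree N (trunc S R)" and "[] \<in> trunc S R"
proof -
  show root: "[] \<in> trunc S R" using assms(2) unfolding trunc_def by force
  show "subtree N (trunc S R)"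
  proof (rule subtree_if_prefix_closed[OF _ root])
    show "trunc S R \<subseteq> vertices N" using assms(1) pre_vertex unfolding trunc_def by blast
    show "take k v \<in> trunc S R" if "v \<in> trunc S R" for v k
      using that unfolding trunc_eq_Pref using Pref_take by auto
  qed
qed

lemma leaves_trunc: "leaves (trunc S R) = (\<lambda>\<xi>. pre \<xi> R) ` S"
proof (intro equalityI subsetI)
  fix v assume v: "v \<in> leaves (trunc S R)"
  then obtain \<xi> j where \<xi>: "\<xi> \<in> S" "v = pre \<xi> j" "j \<le> R"
    unfolding leaves_def trunc_def by blast
  have "j = R"
  proof (rule ccontr)
    assume "j \<noteq> R"
    then have "pre \<xi> (Suc j) \<in> trunc S R"
      using \<xi> unfolding trunc_def by (intro CollectI exI[of _ \<xi>] exI[of _ "Suc j"]) auto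
    then have "pre \<xi> (Suc j) \<in> children (trunc S R) v"
      using \<xi>(2) unfolding children_def by (auto simp: pre_Suc)
    then show False using v unfolding leaves_def by blast
  qed
  then show "v \<in> (\<lambda>\<xi>. pre \<xi> R) ` S" using \<xi> by blast
next
  fix v assume "v \<in> (\<lambda>\<xi>. pre \<xi> R) ` S"
  moreover have "children (trunc S R) (pre \<xi> R) = {}" for \<xi>
    unfolding children_def trunc_eq_Pref by auto
  ultimately show "v \<in> leaves (trunc S R)"
    unfolding leaves_def trunc_def by auto
qed

text \<open>The root of trunc S R has one child for each first letter of a point of S, so
  it has degree at least two exactly when S branches at the root.\<close>
lemma branches_iff_root_degree:
  assumes S: "S \<subseteq> bdry N" "S \<noteq> {}" and R: "1 \<le> R"
  shows "2 \<le> deg N (trunc S R) [] \<longleftrightarrow> branches S"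
proof -
  note T = finite_trunc[OF S(1), of R] trunc_subtree[OF S, of R]
  have ch: "children (trunc S R) [] = (\<lambda>\<xi>. pre \<xi> 1) ` S"
  proof (intro equalityI subsetI)
    fix u assume "u \<in> children (trunc S R) []"
    then obtain \<xi> j a where "\<xi> \<in> S" "u = pre \<xi> j" "u = [a]"
      unfolding children_def trunc_def by auto
    then have "j = 1" by (metis length_pre length_Cons list.size(3) One_nat_def)
    with \<open>\<xi> \<in> S\<close> \<open>u = pre \<xi> j\<close> show "u \<in> (\<lambda>\<xi>. pre \<xi> 1) ` S" by blast
  next
    fix u assume "u \<in> (\<lambda>\<xi>. pre \<xi> 1) ` S"
    then obtain \<xi> where \<xi>: "\<xi> \<in> S" "u = pre \<xi> 1" by blast
    then have "u \<in> trunc S R"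
      using R unfolding trunc_def by (intro CollectI exI[of _ \<xi>] exI[of _ 1]) auto
    then show "u \<in> children (trunc S R) []"
      using \<xi>(2) unfolding children_def by (auto simp: pre_1)
  qed
  have deg: "deg N (trunc S R) [] = card ((\<lambda>\<xi>. pre \<xi> 1) ` S)"
    using deg_rooted[OF T T(3)] ch by simp
  have "finite (children (trunc S R) [])"
    using T(1) unfolding children_def by simp
  then have "finite ((\<lambda>\<xi>. pre \<xi> 1) ` S)" by (simp only: ch)
  then have "2 \<le> deg N (trunc S R) [] \<longleftrightarrow>
      (\<exists>x\<in>(\<lambda>\<xi>. pre \<xi> 1) ` S. \<exists>y\<in>(\<lambda>\<xi>. pre \<xi> 1) ` S. x \<noteq> y)"
    unfolding deg by (rule two_le_card_iff)
  also have "\<dots> \<longleftrightarrow> branches S"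
    unfolding branches_def by (auto simp: pre_1)
  finally show ?thesis .
qed

text \<open>If S branches, trunc S R is a round graph of grade R: its degree-one vertices
  are its leaves, which all have length R.\<close>
lemma trunc_round_graph:
  assumes S: "S \<subseteq> bdry N" and br: "branches S" and R: "1 \<le> R"
  shows "trunc S R \<in> round_graphs N R"
proof -
  have "S \<noteq> {}" using br unfolding branches_def by blast
  note T = finite_trunc[OF S, of R] trunc_subtree[OF S this, of R]
  have root: "2 \<le> deg N (trunc S R) []"
    using branches_iff_root_degree[OF S \<open>S \<noteq> {}\<close> R] br by blast
  have leaf: "length u = R" if u: "u \<in> trunc S R" "deg N (trunc S R) u = 1" for u
  proof -
    have "u \<noteq> []" using u(2) root by auto
    then have "u \<in> (\<lambda>\<xi>. pre \<xi> R) ` S"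
      using deg_one_iff_leaf[OF T u(1)] u(2) leaves_trunc by blast
    then show ?thesis by auto
  qed
  show ?thesis unfolding round_graphs_def dist1_def using T root leaf by auto
qed

section \<open>Cylinders and shadow cylinders\<close>

lemma Cyl_snoc: "\<xi> \<in> Cyl N u (u @ [a]) \<longleftrightarrow> \<xi> \<in> bdry N \<and> pre \<xi> (Suc (length u)) = u @ [a]"
proof
  assume "\<xi> \<in> Cyl N u (u @ [a])"
  then obtain \<gamma> where \<gamma>: "geod_ray N \<gamma>" "\<gamma> 0 = u" "\<gamma> 1 = u @ [a]" "conv_to \<gamma> \<xi>"
    and "\<xi> \<in> bdry N" unfolding Cyl_def by blast
  then show "\<xi> \<in> bdry N \<and> pre \<xi> (Suc (length u)) = u @ [a]"
    using geod_ray_prefixes[OF \<gamma>(1) _ \<gamma>(4), of 1] by simp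
next
  assume \<xi>: "\<xi> \<in> bdry N \<and> pre \<xi> (Suc (length u)) = u @ [a]"
  then have u: "pre \<xi> (length u) = u"
    using take_pre[of "length u" \<xi> "Suc (length u)"] by simp
  define \<gamma> where "\<gamma> n = pre \<xi> (length u + n)" for n
  have "geod_ray N \<gamma>"
    unfolding geod_ray_def
  proof
    fix n
    have "length (\<gamma> (Suc (Suc n))) \<noteq> length (\<gamma> n)" by (simp add: \<gamma>_def)
    then have "\<gamma> (Suc (Suc n)) \<noteq> \<gamma> n" by metis
    then show "adj N (\<gamma> n) (\<gamma> (Suc n)) \<and> \<gamma> (Suc (Suc n)) \<noteq> \<gamma> n"
      using adj_pre[of \<xi> N "length u + n"] \<xi> by (simp add: \<gamma>_def)
  qed
  moreover have "\<gamma> 0 = u" "\<gamma> 1 = u @ [a]" using u \<xi> by (simp_all add: \<gamma>_def)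
  moreover have "conv_to \<gamma> \<xi>" unfolding \<gamma>_def by (rule conv_pre)
  ultimately show "\<xi> \<in> Cyl N u (u @ [a])" using \<xi> unfolding Cyl_def by blast
qed

lemma SCyl_round_graph:
  assumes T: "T \<in> round_graphs N R" and R: "1 \<le> R"
  shows "S \<in> SCyl N T \<longleftrightarrow> S \<in> CN N \<and> (\<lambda>\<xi>. pre \<xi> R) ` S = leaves T"
proof -
  have fin: "finite T" "subtree N T" "[] \<in> T" and root: "2 \<le> deg N T []"
    using T unfolding round_graphs_def by auto
  have leaf: "length v = R" "v \<noteq> []" if "v \<in> leaves T" for v
    using round_graph_leaf_length[OF T that] R by auto
  have cyl: "Cyl N (butlast v) v = {\<xi> \<in> bdry N. pre \<xi> R = v}" if lv: "v \<in> leaves T" for v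
  proof -
    obtain w a where v: "v = w @ [a]" using leaf(2)[OF lv] by (cases v rule: rev_exhaust) auto
    show ?thesis using leaf(1)[OF lv] unfolding v by (auto simp: Cyl_snoc)
  qed
  have te: "terminal_edges N T = (\<lambda>v. (butlast v, v)) ` leaves T"
  proof (intro equalityI subsetI)
    fix e assume e: "e \<in> terminal_edges N T"
    obtain u v where "e = (u, v)" by fastforce
    with e show "e \<in> (\<lambda>v. (butlast v, v)) ` leaves T"
      using terminal_edges_rooted[OF fin root] by auto
  next
    fix e assume "e \<in> (\<lambda>v. (butlast v, v)) ` leaves T"
    then obtain v where "v \<in> leaves T" "e = (butlast v, v)" by blast
    then show "e \<in> terminal_edges N T"
      using terminal_edges_rooted[OF fin root] leaf by blast
  qed
  have "(\<Union>e\<in>terminal_edges N T. Cyl N (fst e) (snd e)) = (\<Union>v\<in>leaves T. {\<xi> \<in> bdry N. pre \<xi> R = v})"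
    unfolding te by (simp add: cyl)
  moreover have "(\<forall>e\<in>terminal_edges N T. S \<inter> Cyl N (fst e) (snd e) \<noteq> {}) \<longleftrightarrow>
      (\<forall>v\<in>leaves T. S \<inter> {\<xi> \<in> bdry N. pre \<xi> R = v} \<noteq> {})"
    unfolding te by (simp add: cyl)
  ultimately have "S \<in> SCyl N T \<longleftrightarrow> S \<in> CN N \<and>
      S \<subseteq> (\<Union>v\<in>leaves T. {\<xi> \<in> bdry N. pre \<xi> R = v}) \<and>
      (\<forall>v\<in>leaves T. S \<inter> {\<xi> \<in> bdry N. pre \<xi> R = v} \<noteq> {})"
    unfolding SCyl_def by simp
  also have "\<dots> \<longleftrightarrow> S \<in> CN N \<and> (\<lambda>\<xi>. pre \<xi> R) ` S = leaves T"
  proof (cases "S \<in> CN N")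
    case True
    then have "S \<subseteq> bdry N" unfolding CN_def by blast
    then have "S \<subseteq> (\<Union>v\<in>leaves T. {\<xi> \<in> bdry N. pre \<xi> R = v}) \<longleftrightarrow>
                 (\<lambda>\<xi>. pre \<xi> R) ` S \<subseteq> leaves T"
          "(\<forall>v\<in>leaves T. S \<inter> {\<xi> \<in> bdry N. pre \<xi> R = v} \<noteq> {}) \<longleftrightarrow>
                 leaves T \<subseteq> (\<lambda>\<xi>. pre \<xi> R) ` S"
      by auto
    then show ?thesis by auto
  qed simp
  finally show ?thesis .
qed

lemma SCyl_round_graph_iff:
  assumes R: "1 \<le> R"
  shows "T \<in> round_graphs N R \<and> S \<in> SCyl N T \<longleftrightarrow> S \<in> CN N \<and> branches S \<and> T = trunc S R"
proof
  assume "T \<in> round_graphs N R \<and> S \<in> SCyl N T"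
  then have T: "T \<in> round_graphs N R" and S: "S \<in> CN N" "(\<lambda>\<xi>. pre \<xi> R) ` S = leaves T"
    using SCyl_round_graph[OF _ R] by blast+
  have "T = trunc S R"
    using round_graph_prefixes_of_leaves[OF T] unfolding trunc_prefixes S(2) .
  moreover have "S \<subseteq> bdry N" "S \<noteq> {}" using S(1) unfolding CN_def by auto
  moreover have "2 \<le> deg N T []" using T unfolding round_graphs_def by blast
  ultimately show "S \<in> CN N \<and> branches S \<and> T = trunc S R"
    using branches_iff_root_degree[OF _ _ R] S(1) by blast
next
  assume S: "S \<in> CN N \<and> branches S \<and> T = trunc S R"
  then have "T \<in> round_graphs N R"
    using trunc_round_graph[OF _ _ R] unfolding CN_def by blast
  with S show "T \<in> round_graphs N R \<and> S \<in> SCyl N T"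
    using SCyl_round_graph[OF _ R] leaves_trunc by blast
qed

section \<open>The decomposition of R(T)\<close>

lemma Pref_inter_iff_trunc_inter:
  assumes short: "\<forall>v\<in>T. length v < R"
  shows "Pref S1 \<inter> Pref S2 = T \<longleftrightarrow> trunc S1 R \<inter> trunc S2 R = T"
proof
  assume "Pref S1 \<inter> Pref S2 = T"
  then have "trunc S1 R \<inter> trunc S2 R = T \<inter> {w. length w \<le> R}"
    unfolding trunc_eq_Pref by blast
  also have "\<dots> = T" using short by fastforce
  finally show "trunc S1 R \<inter> trunc S2 R = T" .
next
  assume tr: "trunc S1 R \<inter> trunc S2 R = T"
  show "Pref S1 \<inter> Pref S2 = T"
  proof (intro equalityI subsetI)
    fix w assume w: "w \<in> Pref S1 \<inter> Pref S2"
    show "w \<in> T"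
    proof (cases "length w \<le> R")
      case True
      then show ?thesis using w tr unfolding trunc_eq_Pref by blast
    next
      case False
      then have "take R w \<in> T" "length (take R w) = R"
        using w tr Pref_take unfolding trunc_eq_Pref by auto
      then show ?thesis using short by fastforce
    qed
  qed (use tr in \<open>auto simp: trunc_eq_Pref\<close>)
qed

text \<open>Since a shadow cylinder determines its round graph, shadow cylinders of distinct
  round graphs of the same grade are disjoint.\<close>
lemma SCyl_round_graphs_disjoint:
  assumes "1 \<le> R" and "T1 \<in> round_graphs N R" and "T2 \<in> round_graphs N R" and "T1 \<noteq> T2"
  shows "SCyl N T1 \<inter> SCyl N T2 = {}"
proof -
  have "T1 = trunc S R" "T2 = trunc S R" if "S \<in> SCyl N T1" "S \<in> SCyl N T2" for S
    using SCyl_round_graph_iff[OF assms(1), of T1 N S] SCyl_round_graph_iff[OF assms(1), of T2 N S]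
      assms(2,3) that by simp_all
  then show ?thesis using assms(4) by blast
qed

lemma SCyl_pairs_union:
  assumes R: "1 \<le> R"
  shows "(\<Union>(T1, T2)\<in>{(T1, T2). T1 \<in> round_graphs N R \<and> T2 \<in> round_graphs N R \<and> T1 \<inter> T2 = T}.
            SCyl N T1 \<times> SCyl N T2) =
         {(S1, S2). S1 \<in> CN N \<and> S2 \<in> CN N \<and> branches S1 \<and> branches S2 \<and>
                    trunc S1 R \<inter> trunc S2 R = T}"
    (is "?U = ?P")
proof (intro equalityI subsetI)
  fix p assume "p \<in> ?U"
  then obtain T1 T2 S1 S2 where p: "p = (S1, S2)" and T: "T1 \<inter> T2 = T"
    and S1: "T1 \<in> round_graphs N R \<and> S1 \<in> SCyl N T1"
    and S2: "T2 \<in> round_graphs N R \<and> S2 \<in> SCyl N T2"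
    by blast
  then show "p \<in> ?P" using SCyl_round_graph_iff[OF R] by simp
next
  fix p assume "p \<in> ?P"
  then obtain S1 S2 where p: "p = (S1, S2)" and T: "trunc S1 R \<inter> trunc S2 R = T"
    and S: "S1 \<in> CN N" "branches S1" "S2 \<in> CN N" "branches S2"
    by blast
  then have "trunc S1 R \<in> round_graphs N R \<and> S1 \<in> SCyl N (trunc S1 R)"
    "trunc S2 R \<in> round_graphs N R \<and> S2 \<in> SCyl N (trunc S2 R)"
    using SCyl_round_graph_iff[OF R] by simp_all
  with p T show "p \<in> ?U" by (intro UN_I[of "(trunc S1 R, trunc S2 R)"]) auto
qed

text \<open>The main theorem.\<close>
theorem mainTheorem9:
  fixes N r :: nat and T :: "word set"
  assumes "N \<ge> 2" and "T \<in> SubBar N" and "r \<ge> 1" and "\<forall>v\<in>T. dist1 v \<le> r"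
  shows "Rset N T =
           (\<Union>(T1, T2)\<in>{(T1, T2). T1 \<in> round_graphs N (r + 1) \<and> T2 \<in> round_graphs N (r + 1) \<and> T1 \<inter> T2 = T}.
              SCyl N T1 \<times> SCyl N T2)
       \<and> (\<forall>P\<in>{(T1, T2). T1 \<in> round_graphs N (r + 1) \<and> T2 \<in> round_graphs N (r + 1) \<and> T1 \<inter> T2 = T}.
          \<forall>Q\<in>{(T1, T2). T1 \<in> round_graphs N (r + 1) \<and> T2 \<in> round_graphs N (r + 1) \<and> T1 \<inter> T2 = T}.
            P \<noteq> Q \<longrightarrow> (SCyl N (fst P) \<times> SCyl N (snd P)) \<inter> (SCyl N (fst Q) \<times> SCyl N (snd Q)) = {})"
proof
  let ?I = "{(T1, T2). T1 \<in> round_graphs N (r + 1) \<and> T2 \<in> round_graphs N (r + 1) \<and> T1 \<inter> T2 = T}"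
  have grade: "1 \<le> r + 1" by simp
  have root: "[] \<in> T" using assms(2) unfolding SubBar_def by blast
  have short: "\<forall>v\<in>T. length v < r + 1" using assms(4) unfolding dist1_def by auto
  show "Rset N T = (\<Union>(T1, T2)\<in>?I. SCyl N T1 \<times> SCyl N T2)"
    unfolding Rset_rooted[OF root] Pref_inter_iff_trunc_inter[OF short] SCyl_pairs_union[OF grade] ..
  show "\<forall>P\<in>?I. \<forall>Q\<in>?I. P \<noteq> Q \<longrightarrow>
          (SCyl N (fst P) \<times> SCyl N (snd P)) \<inter> (SCyl N (fst Q) \<times> SCyl N (snd Q)) = {}"
  proof (intro ballI impI)
    fix P Q assume "P \<in> ?I" "Q \<in> ?I" "P \<noteq> Q"
    then have "fst P \<in> round_graphs N (r + 1)" "snd P \<in> round_graphs N (r + 1)"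
      "fst Q \<in> round_graphs N (r + 1)" "snd Q \<in> round_graphs N (r + 1)"
      "fst P \<noteq> fst Q \<or> snd P \<noteq> snd Q" by (auto simp: prod_eq_iff)
    then have "SCyl N (fst P) \<inter> SCyl N (fst Q) = {} \<or> SCyl N (snd P) \<inter> SCyl N (snd Q) = {}"
      using SCyl_round_graphs_disjoint[OF grade] by metis
    then show "(SCyl N (fst P) \<times> SCyl N (snd P)) \<inter> (SCyl N (fst Q) \<times> SCyl N (snd Q)) = {}"
      by blast
  qed
qed

end
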